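(* Assume the convex setting described in the context. Suppose that on every compact set $X\subseteq\operatorname{dom}F$ the following hold: (C1) for every $x\in X$ the moment generating function $M_x(t)=\mathbb{E}[e^{t(f_\xi(x)-F(x))}]$ is finite for all $t$ in a neighborhood of $0$; (C2) there is a measurable $\kappa:\Xi\to\mathbb{R}_+$ with $\mathbb{E}[\kappa(\xi)]=L<\infty$ such that $f_\xi$ is $\kappa(\xi)$-Lipschitz on $X$ for all $\xi$; (C3) $\mathbb{E}[e^{t\kappa(\xi)}]$ is finite for all $t$ in a neighborhood of $0$. If the set $\mathcal{X}^*$ of optimal solutions of $\inf_{x\in\mathcal X}F(x)$ is contained in the interior of $\operatorname{dom}F$, then there exist positive constants $C$ and $\beta$, independent of $N$, such that \[\mathbb{P}^N\{d(x^*(\xi^{[N]}))<1\}\le Ce^{-N\beta}.\]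
   Context: Setting: $\mathcal{X}\subseteq\mathbb{R}^n$ is a nonempty closed convex set; $\xi$ is a random vector with support $\Xi$ and distribution $\mathbb P$; for each $\xi\in\Xi$, $f_\xi:\mathbb{R}^n\to\mathbb{R}\cup\{+\infty\}$ is convex; $F(x)=\mathbb{E}[f_\xi(x)]$, with $F>-\infty$ everywhere and $F(x)<+\infty$ for some $x\in\mathcal X$; $\operatorname{dom}F=\{x:F(x)<+\infty\}$; the optimal set $\mathcal X^*$ of $\inf_{x\in\mathcal X}F(x)$ is nonempty and compact. $\xi^{[N]}=(\xi^1,\dots,\xi^N)$ is an i.i.d. sample with product measure $\mathbb P^N$, $\hat F_N(x)=\frac1N\sum_{i=1}^Nf_{\xi^i}(x)$, and $x^*(\xi^{[N]})$ is an optimal solution of the SAA problem $\inf_{x\in\mathcal X}\hat F_N(x)$ (assigned to each sample, with $\hat F_N(x^* )<+\infty$). Degree of feasibility: $d(x^*(\xi^{[N]}))=\mathbb{P}\{\xi\in\Xi:f_\xi(x^*(\xi^{[N]}))<+\infty\}$. *)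

theory Defs
  imports "HOL-Probability.Probability"
begin

definition ext_convex :: "('a::real_vector \<Rightarrow> ereal) \<Rightarrow> bool" where
  "ext_convex g \<longleftrightarrow>
     (\<forall>x y t. 0 \<le> t \<and> t \<le> 1 \<longrightarrow>
        g ((1 - t) *\<^sub>R x + t *\<^sub>R y) \<le> ereal (1 - t) * g x + ereal t * g y)"

definition ext_expectation :: "'b measure \<Rightarrow> ('b \<Rightarrow> ereal) \<Rightarrow> ereal" where
  "ext_expectation M g =
     enn2ereal (\<integral>\<^sup>+ \<omega>. e2ennreal (g \<omega>) \<partial>M) - enn2ereal (\<integral>\<^sup>+ \<omega>. e2ennreal (- g \<omega>) \<partial>M)"

definition Fobj :: "'b measure \<Rightarrow> ('b \<Rightarrow> 'a \<Rightarrow> ereal) \<Rightarrow> 'a \<Rightarrow> ereal" where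
  "Fobj M f x = ext_expectation M (\<lambda>\<omega>. f \<omega> x)"

definition domF :: "'b measure \<Rightarrow> ('b \<Rightarrow> 'a \<Rightarrow> ereal) \<Rightarrow> 'a set" where
  "domF M f = {x. Fobj M f x < \<infinity>}"

definition opt_set :: "'b measure \<Rightarrow> ('b \<Rightarrow> 'a \<Rightarrow> ereal) \<Rightarrow> 'a set \<Rightarrow> 'a set" where
  "opt_set M f X = {x \<in> X. Fobj M f x = (INF y\<in>X. Fobj M f y)}"

definition saa_obj :: "('b \<Rightarrow> 'a \<Rightarrow> ereal) \<Rightarrow> nat \<Rightarrow> (nat \<Rightarrow> 'b) \<Rightarrow> 'a \<Rightarrow> ereal" where
  "saa_obj f N s x = (\<Sum>i<N. f (s i) x) / ereal (real N)"

definition feas_degree :: "'b measure \<Rightarrow> ('b \<Rightarrow> 'a \<Rightarrow> ereal) \<Rightarrow> 'a \<Rightarrow> real" where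
  "feas_degree M f x = measure M {\<omega> \<in> space M. f \<omega> x < \<infinity>}"

end

theory Submission
  imports Defs
begin

text \<open>
  Since the compact optimal set lies in the interior of \<open>dom F\<close>, a closed \<open>\<epsilon>\<close>-neighbourhood
  of it lies in \<open>dom F\<close>, and (C2) applied to a singleton shows that every point of \<open>dom F\<close>
  has degree of feasibility 1. So an SAA solution of degree \<open>< 1\<close> is at distance at least
  \<open>\<epsilon>\<close> from the optimal set. Convexity of the sample objective on the segment from an
  optimal point \<open>x\<^sub>0\<close> to such a solution yields a point \<open>z\<close> at distance exactly \<open>\<epsilon>\<close>
  whose sample average does not exceed the one at \<open>x\<^sub>0\<close>. Covering this compact level set by
  finitely many small balls and using the Lipschitz bound (C2), some ball centre \<open>c\<close> has sample
  average at most that of \<open>x\<^sub>0\<close> plus a small error, although \<open>F c\<close> exceeds \<open>F x\<^sub>0\<close> by a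
  fixed gap. Hence one of finitely many sample averages (of \<open>\<kappa>\<close>, of \<open>f(\<cdot>, x\<^sub>0)\<close>, of the
  \<open>f(\<cdot>, c)\<close>) deviates from its mean by a fixed amount, which by the Cramer-Chernoff bound
  under (C1) and (C3) has exponentially small probability.
\<close>

section \<open>Cramer-Chernoff bounds for i.i.d. samples\<close>

lemma exp_le_Taylor_quadratic_abs: "exp (x::real) \<le> 1 + x + x\<^sup>2 / 2 * exp \<bar>x\<bar>"
proof -
  obtain t where "\<bar>t\<bar> \<le> \<bar>x\<bar>" and "exp x = (\<Sum>m<2. x ^ m / fact m) + exp t / fact 2 * x\<^sup>2"
    using Maclaurin_exp_le[of x 2] by blast
  moreover have "exp t * x\<^sup>2 \<le> exp \<bar>x\<bar> * x\<^sup>2"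
    using \<open>\<bar>t\<bar> \<le> \<bar>x\<bar>\<close> by (intro mult_right_mono) auto
  ultimately show ?thesis by (simp add: numeral_2_eq_2 field_simps)
qed

lemma exp_le_quadratic_majorant:
  fixes \<delta> t y :: real
  assumes "0 < \<delta>" "0 \<le> t" "t \<le> \<delta> / 4"
  shows "exp (t * y) \<le> 1 + t * y + t\<^sup>2 * (16 / \<delta>\<^sup>2 * (exp (\<delta> / 2 * y) + exp (- (\<delta> / 2) * y)))"
proof -
  define u where "u = \<delta> * \<bar>y\<bar> / 4"
  have "u \<ge> 0"
    using assms by (simp add: u_def)
  then have "u\<^sup>2 \<le> 2 * exp u"
    using exp_lower_Taylor_quadratic[of u] by linarith
  then have y2: "y\<^sup>2 / 2 \<le> 16 / \<delta>\<^sup>2 * exp u"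
    using assms by (simp add: u_def power_mult_distrib field_simps power2_abs)
  have "exp \<bar>t * y\<bar> \<le> exp u"
    using assms mult_right_mono[of t "\<delta> / 4" "\<bar>y\<bar>"] by (simp add: u_def abs_mult)
  then have "y\<^sup>2 / 2 * exp \<bar>t * y\<bar> \<le> 16 / \<delta>\<^sup>2 * exp u * exp u"
    using y2 by (intro mult_mono) auto
  also have "\<dots> = 16 / \<delta>\<^sup>2 * exp \<bar>\<delta> / 2 * y\<bar>"
    using assms by (simp add: u_def abs_mult flip: exp_add)
  also have "\<dots> \<le> 16 / \<delta>\<^sup>2 * (exp (\<delta> / 2 * y) + exp (- (\<delta> / 2) * y))"
    using exp_ge_zero[of "\<delta> / 2 * y"] exp_ge_zero[of "- (\<delta> / 2) * y"]
    by (intro mult_left_mono) (auto simp: abs_real_def)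
  finally have "t\<^sup>2 * (y\<^sup>2 / 2 * exp \<bar>t * y\<bar>) \<le> t\<^sup>2 * (16 / \<delta>\<^sup>2 * (exp (\<delta> / 2 * y) + exp (- (\<delta> / 2) * y)))"
    by (rule mult_left_mono) simp
  moreover have "(t * y)\<^sup>2 / 2 * exp \<bar>t * y\<bar> = t\<^sup>2 * (y\<^sup>2 / 2 * exp \<bar>t * y\<bar>)"
    by (simp add: power_mult_distrib)
  ultimately show ?thesis
    using exp_le_Taylor_quadratic_abs[of "t * y"] by linarith
qed

definition mgf_finite_near_0 :: "'b measure \<Rightarrow> ('b \<Rightarrow> real) \<Rightarrow> bool" where
  "mgf_finite_near_0 P h \<longleftrightarrow> (\<exists>\<delta>>0. \<forall>t. \<bar>t\<bar> < \<delta> \<longrightarrow> integrable P (\<lambda>\<omega>. exp (t * h \<omega>)))"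

lemma mgf_finite_near_0_add_const:
  assumes "mgf_finite_near_0 P h"
  shows "mgf_finite_near_0 P (\<lambda>\<omega>. h \<omega> + c)"
proof -
  obtain \<delta> where "\<delta> > 0" and int: "\<forall>t. \<bar>t\<bar> < \<delta> \<longrightarrow> integrable P (\<lambda>\<omega>. exp (t * h \<omega>))"
    using assms by (auto simp: mgf_finite_near_0_def)
  have "exp (t * (h \<omega> + c)) = exp (t * c) * exp (t * h \<omega>)" for t \<omega>
    by (simp add: distrib_left exp_add)
  with \<open>\<delta> > 0\<close> int show ?thesis
    unfolding mgf_finite_near_0_def by (auto intro!: exI[of _ \<delta>])
qed

lemma mgf_finite_near_0_diff_const_iff:
  "mgf_finite_near_0 P (\<lambda>\<omega>. h \<omega> - c) \<longleftrightarrow> mgf_finite_near_0 P h"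
  using mgf_finite_near_0_add_const[of P h "- c"] mgf_finite_near_0_add_const[of P "\<lambda>\<omega>. h \<omega> - c" c]
  by auto

lemma mgf_finite_near_0_uminus:
  assumes "mgf_finite_near_0 P h"
  shows "mgf_finite_near_0 P (\<lambda>\<omega>. - h \<omega>)"
proof -
  obtain \<delta> where "\<delta> > 0" and int: "\<forall>t. \<bar>t\<bar> < \<delta> \<longrightarrow> integrable P (\<lambda>\<omega>. exp (t * h \<omega>))"
    using assms by (auto simp: mgf_finite_near_0_def)
  then show ?thesis
    unfolding mgf_finite_near_0_def by (auto intro!: exI[of _ \<delta>] dest: spec[of _ "- _"])
qed

lemma mgf_finite_near_0I:
  assumes "h \<in> borel_measurable P" "0 < \<delta>"
    and "\<forall>t. \<bar>t\<bar> < \<delta> \<longrightarrow> (\<integral>\<^sup>+ \<omega>. ennreal (exp (t * h \<omega>)) \<partial>P) < \<infinity>"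
  shows "mgf_finite_near_0 P h"
  using assms unfolding mgf_finite_near_0_def by (auto intro!: exI[of _ \<delta>] integrableI_nonneg)

abbreviation iid_sample :: "'b measure \<Rightarrow> nat \<Rightarrow> (nat \<Rightarrow> 'b) measure" where
  "iid_sample P N \<equiv> PiM {..<N} (\<lambda>_. P)"

definition exponentially_rare :: "'b measure \<Rightarrow> (nat \<Rightarrow> (nat \<Rightarrow> 'b) set) \<Rightarrow> bool" where
  "exponentially_rare P A \<longleftrightarrow> (\<forall>N. A N \<in> sets (iid_sample P N)) \<and>
     (\<exists>C>0. \<exists>\<beta>>0. \<forall>N. measure (iid_sample P N) (A N) \<le> C * exp (- real N * \<beta>))"

lemma (in prob_space) centered_mgf_le_exp_linear:
  assumes "integrable M h" "expectation h = 0" "mgf_finite_near_0 M h" "0 < a"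
  obtains t where "0 < t" "integrable M (\<lambda>\<omega>. exp (t * h \<omega>))"
    "expectation (\<lambda>\<omega>. exp (t * h \<omega>)) \<le> exp (t * a)"
proof -
  obtain \<delta> where "0 < \<delta>" and int_exp: "\<And>t. \<bar>t\<bar> < \<delta> \<Longrightarrow> integrable M (\<lambda>\<omega>. exp (t * h \<omega>))"
    using assms(3) by (auto simp: mgf_finite_near_0_def)
  define E where "E \<omega> = exp (\<delta> / 2 * h \<omega>) + exp (- (\<delta> / 2) * h \<omega>)" for \<omega>
  have int_E: "integrable M E"
    unfolding E_def using int_exp[of "\<delta> / 2"] int_exp[of "- (\<delta> / 2)"] \<open>0 < \<delta>\<close> by auto
  define c where "c = 16 / \<delta>\<^sup>2 * expectation E"
  have "0 \<le> c"
    unfolding c_def E_def by (intro mult_nonneg_nonneg integral_nonneg_AE) auto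
  define t where "t = min (\<delta> / 4) (a / (c + 1))"
  have t: "0 < t" "t \<le> \<delta> / 4" "c * t \<le> a"
    using \<open>0 < \<delta>\<close> \<open>0 < a\<close> \<open>0 \<le> c\<close> by (auto simp: t_def min_def field_simps)
  have int_t: "integrable M (\<lambda>\<omega>. exp (t * h \<omega>))"
    using t \<open>0 < \<delta>\<close> by (intro int_exp) auto
  have majorant: "exp (t * h \<omega>) \<le> 1 + t * h \<omega> + t\<^sup>2 * (16 / \<delta>\<^sup>2 * E \<omega>)" for \<omega>
    unfolding E_def using t \<open>0 < \<delta>\<close> by (intro exp_le_quadratic_majorant) auto
  \<comment> \<open>The linear term of the majorant integrates to 0, leaving \<open>1 + c t\<^sup>2 \<le> 1 + t a\<close>.\<close>
  have "expectation (\<lambda>\<omega>. exp (t * h \<omega>)) \<le> expectation (\<lambda>\<omega>. 1 + t * h \<omega> + t\<^sup>2 * (16 / \<delta>\<^sup>2 * E \<omega>))"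
    using int_E assms(1) by (intro integral_mono int_t majorant) auto
  also have "\<dots> = 1 + c * t\<^sup>2"
    using int_E assms(1,2) by (simp add: c_def prob_space algebra_simps)
  also have "\<dots> \<le> 1 + t * a"
    using t by (simp add: power2_eq_square mult_left_mono mult.left_commute)
  also have "\<dots> \<le> exp (t * a)"
    by (rule exp_ge_add_one_self)
  finally show ?thesis
    using that t(1) int_t by blast
qed

lemma (in prob_space) iid_sum_tail_le_mgf_power:
  assumes "h \<in> borel_measurable M" "integrable M (\<lambda>\<omega>. exp (t * h \<omega>))" "0 < t"
  shows "measure (iid_sample M N) {s \<in> space (iid_sample M N). b \<le> (\<Sum>i<N. h (s i))}
           \<le> expectation (\<lambda>\<omega>. exp (t * h \<omega>)) ^ N / exp (t * b)"
proof -
  interpret Q: product_prob_space "\<lambda>_. M" "{..<N}"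
    by unfold_locales
  let ?u = "\<lambda>s. \<Prod>i<N. exp (t * h (s i))"
  have "?u s = exp (t * (\<Sum>i<N. h (s i)))" for s
    by (simp add: exp_sum sum_distrib_left)
  then have "{s \<in> space (iid_sample M N). b \<le> (\<Sum>i<N. h (s i))}
      = {s \<in> space (iid_sample M N). exp (t * b) \<le> ?u s}"
    using \<open>0 < t\<close> by auto
  also have "measure (iid_sample M N) \<dots> \<le> (\<integral>s. ?u s \<partial>iid_sample M N) / exp (t * b)"
    using assms(2) by (intro integral_Markov_inequality_measure[where A = "space (iid_sample M N)"]
        Q.product_integrable_prod) (auto intro!: prod_nonneg)
  also have "(\<integral>s. ?u s \<partial>iid_sample M N) = expectation (\<lambda>\<omega>. exp (t * h \<omega>)) ^ N"
    using Q.product_integral_prod[where f = "\<lambda>_ \<omega>. exp (t * h \<omega>)"] assms(2) by simp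
  finally show ?thesis .
qed

lemma (in prob_space) iid_upper_tail_exponentially_rare:
  assumes "integrable M h" "mgf_finite_near_0 M h" "0 < a"
  shows "exponentially_rare M
    (\<lambda>N. {s \<in> space (iid_sample M N). real N * (expectation h + a) \<le> (\<Sum>i<N. h (s i))})"
proof -
  define g where "g = (\<lambda>\<omega>. h \<omega> - expectation h)"
  have [measurable]: "h \<in> borel_measurable M"
    using assms(1) by auto
  have "integrable M g"
    using assms(1) by (simp add: g_def)
  moreover have "expectation g = 0"
    using assms(1) by (simp add: g_def prob_space)
  moreover have "mgf_finite_near_0 M g"
    using assms(2) by (simp add: g_def mgf_finite_near_0_diff_const_iff)
  ultimately obtain t where "0 < t" and int: "integrable M (\<lambda>\<omega>. exp (t * g \<omega>))"
    and mgf: "expectation (\<lambda>\<omega>. exp (t * g \<omega>)) \<le> exp (t * (a / 2))"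
    by (rule centered_mgf_le_exp_linear[where a = "a / 2"]) (use assms(3) in auto)
  have "measure (iid_sample M N)
      {s \<in> space (iid_sample M N). real N * (expectation h + a) \<le> (\<Sum>i<N. h (s i))}
      \<le> 1 * exp (- real N * (t * a / 2))" for N
  proof -
    have "{s \<in> space (iid_sample M N). real N * (expectation h + a) \<le> (\<Sum>i<N. h (s i))}
        = {s \<in> space (iid_sample M N). real N * a \<le> (\<Sum>i<N. g (s i))}"
      by (auto simp: g_def sum_subtractf algebra_simps)
    also have "measure (iid_sample M N) \<dots> \<le> expectation (\<lambda>\<omega>. exp (t * g \<omega>)) ^ N / exp (t * (real N * a))"
      using int \<open>0 < t\<close> by (intro iid_sum_tail_le_mgf_power) (auto simp: g_def)
    also have "\<dots> \<le> exp (t * (a / 2)) ^ N / exp (t * (real N * a))"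
      using mgf by (intro divide_right_mono power_mono integral_nonneg_AE) auto
    also have "\<dots> = 1 * exp (- real N * (t * a / 2))"
      by (simp flip: exp_of_nat_mult exp_diff add: algebra_simps)
    finally show ?thesis .
  qed
  then show ?thesis
    unfolding exponentially_rare_def using \<open>0 < t\<close> \<open>0 < a\<close>
    by (intro conjI allI exI[of _ 1] exI[of _ "t * a / 2"]) auto
qed

lemma (in prob_space) iid_lower_tail_exponentially_rare:
  assumes "integrable M h" "mgf_finite_near_0 M h" "0 < a"
  shows "exponentially_rare M
    (\<lambda>N. {s \<in> space (iid_sample M N). (\<Sum>i<N. h (s i)) \<le> real N * (expectation h - a)})"
proof -
  have "exponentially_rare M
    (\<lambda>N. {s \<in> space (iid_sample M N). real N * (expectation (\<lambda>\<omega>. - h \<omega>) + a) \<le> (\<Sum>i<N. - h (s i))})"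
    using assms by (intro iid_upper_tail_exponentially_rare mgf_finite_near_0_uminus) auto
  then show ?thesis
    by (simp add: sum_negf algebra_simps)
qed

lemma exponentially_rare_Un:
  assumes "exponentially_rare P A" "exponentially_rare P B"
  shows "exponentially_rare P (\<lambda>N. A N \<union> B N)"
proof -
  obtain C\<^sub>A \<beta>\<^sub>A C\<^sub>B \<beta>\<^sub>B where pos: "0 < C\<^sub>A" "0 < \<beta>\<^sub>A" "0 < C\<^sub>B" "0 < \<beta>\<^sub>B"
    and A: "\<And>N. measure (iid_sample P N) (A N) \<le> C\<^sub>A * exp (- real N * \<beta>\<^sub>A)"
    and B: "\<And>N. measure (iid_sample P N) (B N) \<le> C\<^sub>B * exp (- real N * \<beta>\<^sub>B)"
    using assms unfolding exponentially_rare_def by metis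
  have "measure (iid_sample P N) (A N \<union> B N) \<le> (C\<^sub>A + C\<^sub>B) * exp (- real N * min \<beta>\<^sub>A \<beta>\<^sub>B)" for N
  proof -
    have "measure (iid_sample P N) (A N \<union> B N) \<le> C\<^sub>A * exp (- real N * \<beta>\<^sub>A) + C\<^sub>B * exp (- real N * \<beta>\<^sub>B)"
      using assms A[of N] B[of N] measure_Un_le[of "A N" "iid_sample P N" "B N"]
      by (simp add: exponentially_rare_def)
    also have "\<dots> \<le> C\<^sub>A * exp (- real N * min \<beta>\<^sub>A \<beta>\<^sub>B) + C\<^sub>B * exp (- real N * min \<beta>\<^sub>A \<beta>\<^sub>B)"
      using pos by (intro add_mono mult_left_mono) (auto intro: mult_left_mono)
    finally show ?thesis
      by (simp add: distrib_right)
  qed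
  with assms pos show ?thesis
    unfolding exponentially_rare_def by (intro conjI allI exI[of _ "C\<^sub>A + C\<^sub>B"] exI[of _ "min \<beta>\<^sub>A \<beta>\<^sub>B"]) auto
qed

lemma exponentially_rare_UN:
  assumes "finite T" "\<And>c. c \<in> T \<Longrightarrow> exponentially_rare P (E c)"
  shows "exponentially_rare P (\<lambda>N. \<Union>c\<in>T. E c N)"
  using assms
proof (induction T rule: finite_induct)
  case empty
  show ?case
    unfolding exponentially_rare_def by (intro conjI allI exI[of _ 1]) auto
next
  case (insert c T)
  then show ?case
    using exponentially_rare_Un[of P "E c" "\<lambda>N. \<Union>c\<in>T. E c N"] by simp
qed

lemma thickening_subset_of_subset_interior:
  fixes S :: "'a::heine_borel set"
  assumes "compact S" "S \<noteq> {}" "S \<subseteq> interior D"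
  obtains \<epsilon> where "0 < \<epsilon>" "{x. infdist x S \<le> \<epsilon>} \<subseteq> D"
proof -
  obtain d where "0 < d" and sep: "\<forall>x\<in>S. \<forall>y\<in>- interior D. d \<le> dist x y"
    using separate_compact_closed[of S "- interior D"] assms by auto
  have "x \<in> D" if "infdist x S \<le> d / 2" for x
  proof -
    obtain s where "s \<in> S" "infdist x S = dist x s"
      using infdist_attains_inf[OF compact_imp_closed[OF assms(1)] assms(2)] by metis
    then have "x \<in> interior D"
      using sep that \<open>0 < d\<close> by (force simp: dist_commute)
    then show ?thesis
      using interior_subset by blast
  qed
  then show ?thesis
    using that[of "d / 2"] \<open>0 < d\<close> by auto
qed

lemma infdist_level_on_segment:
  fixes x y :: "'a::real_normed_vector"
  assumes "infdist x S \<le> \<epsilon>" "\<epsilon> \<le> infdist y S"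
  obtains t where "0 \<le> t" "t \<le> 1" "infdist ((1 - t) *\<^sub>R x + t *\<^sub>R y) S = \<epsilon>"
proof -
  have "continuous_on {0..1} (\<lambda>t. infdist ((1 - t) *\<^sub>R x + t *\<^sub>R y) S)"
    by (intro continuous_intros)
  then show ?thesis
    using IVT'[of "\<lambda>t. infdist ((1 - t) *\<^sub>R x + t *\<^sub>R y) S" 0 \<epsilon> 1] assms that by auto
qed

lemma compact_infdist_level:
  fixes S :: "'a::heine_borel set"
  assumes "closed X" "compact S" "S \<noteq> {}" "0 < \<epsilon>"
  shows "compact {x \<in> X. infdist x S = \<epsilon>}"
proof -
  have "{x \<in> X. infdist x S = \<epsilon>} = {x. infdist x S \<le> \<epsilon>} \<inter> (X \<inter> {x. infdist x S = \<epsilon>})"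
    by auto
  moreover have "closed {x. infdist x S = \<epsilon>}"
    by (intro closed_Collect_eq continuous_intros)
  ultimately show ?thesis
    using compact_infdist_le[OF assms(3,2,4)] assms(1) by (simp add: compact_Int_closed closed_Int)
qed

lemma compact_continuous_gap:
  fixes g :: "'a::topological_space \<Rightarrow> real"
  assumes "compact B" "continuous_on B g" "\<forall>z\<in>B. a < g z"
  obtains \<eta> where "0 < \<eta>" "\<forall>z\<in>B. a + \<eta> \<le> g z"
proof (cases "B = {}")
  case False
  then obtain z\<^sub>0 where "z\<^sub>0 \<in> B" "\<forall>z\<in>B. g z\<^sub>0 \<le> g z"
    using continuous_attains_inf[OF assms(1) _ assms(2)] by blast
  then show ?thesis
    using that[of "g z\<^sub>0 - a"] assms(3) by force
qed (use that[of 1] in simp)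

lemma ext_convex_real_le:
  assumes "ext_convex g" "\<forall>x. g x \<noteq> -\<infinity>" "g x < \<infinity>" "g y < \<infinity>" "0 \<le> t" "t \<le> 1"
  shows "real_of_ereal (g ((1 - t) *\<^sub>R x + t *\<^sub>R y))
           \<le> (1 - t) * real_of_ereal (g x) + t * real_of_ereal (g y)"
proof -
  obtain a b where "g x = ereal a" "g y = ereal b"
    using assms(2-4) by (metis less_ereal.simps(2) real_of_ereal.elims)
  moreover have "g ((1 - t) *\<^sub>R x + t *\<^sub>R y) \<le> ereal (1 - t) * g x + ereal t * g y"
    using assms(1,5,6) unfolding ext_convex_def by blast
  ultimately show ?thesis
    using assms(2)[rule_format, of "(1 - t) *\<^sub>R x + t *\<^sub>R y"]
    by (cases "g ((1 - t) *\<^sub>R x + t *\<^sub>R y)") auto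
qed

lemma lipschitz_on_integral:
  fixes h :: "'b \<Rightarrow> 'a::metric_space \<Rightarrow> real"
  assumes "\<And>x. x \<in> K \<Longrightarrow> integrable M (\<lambda>\<omega>. h \<omega> x)" "integrable M \<kappa>"
    and "\<And>\<omega>. \<omega> \<in> space M \<Longrightarrow> lipschitz_on (\<kappa> \<omega>) K (h \<omega>)"
  shows "lipschitz_on (\<integral>\<omega>. \<kappa> \<omega> \<partial>M) K (\<lambda>x. \<integral>\<omega>. h \<omega> x \<partial>M)"
proof (rule lipschitz_onI)
  fix x y assume "x \<in> K" "y \<in> K"
  have "dist (\<integral>\<omega>. h \<omega> x \<partial>M) (\<integral>\<omega>. h \<omega> y \<partial>M) = \<bar>\<integral>\<omega>. h \<omega> x - h \<omega> y \<partial>M\<bar>"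
    using assms(1) \<open>x \<in> K\<close> \<open>y \<in> K\<close> by (simp add: dist_real_def)
  also have "\<dots> \<le> (\<integral>\<omega>. \<bar>h \<omega> x - h \<omega> y\<bar> \<partial>M)"
    using integral_abs_bound by blast
  also have "\<dots> \<le> (\<integral>\<omega>. \<kappa> \<omega> * dist x y \<partial>M)"
    using assms \<open>x \<in> K\<close> \<open>y \<in> K\<close> lipschitz_onD[OF assms(3)]
    by (intro integral_mono) (auto simp: dist_real_def)
  finally show "dist (\<integral>\<omega>. h \<omega> x \<partial>M) (\<integral>\<omega>. h \<omega> y \<partial>M) \<le> (\<integral>\<omega>. \<kappa> \<omega> \<partial>M) * dist x y"
    by simp
next
  show "0 \<le> (\<integral>\<omega>. \<kappa> \<omega> \<partial>M)"
    using assms(3) lipschitz_on_nonneg by (intro integral_nonneg_AE AE_I2) auto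
qed

lemma sum_le_lipschitz_on:
  fixes g :: "'i \<Rightarrow> 'a::metric_space \<Rightarrow> real"
  assumes "\<And>i. i \<in> I \<Longrightarrow> lipschitz_on (k i) K (g i)" "c \<in> K" "z \<in> K" "dist c z \<le> r"
  shows "(\<Sum>i\<in>I. g i c) \<le> (\<Sum>i\<in>I. g i z) + r * (\<Sum>i\<in>I. k i)"
proof -
  have "g i c \<le> g i z + r * k i" if "i \<in> I" for i
  proof -
    have "dist (g i c) (g i z) \<le> k i * dist c z"
      using lipschitz_onD[OF assms(1)[OF that] assms(2,3)] .
    also have "\<dots> \<le> k i * r"
      using assms(4) lipschitz_on_nonneg[OF assms(1)[OF that]] by (rule mult_left_mono)
    finally show ?thesis
      by (simp add: dist_real_def abs_le_iff algebra_simps)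
  qed
  then show ?thesis
    by (simp add: sum_distrib_left sum.distrib[symmetric] sum_mono)
qed

lemma ext_expectation_eq_integral:
  fixes g :: "'b \<Rightarrow> ereal"
  assumes "g \<in> borel_measurable M" "\<forall>\<omega>\<in>space M. \<bar>g \<omega>\<bar> \<noteq> \<infinity>"
    and "(\<integral>\<^sup>+ \<omega>. e2ennreal (- g \<omega>) \<partial>M) < \<infinity>" "ext_expectation M g < \<infinity>"
  shows "integrable M (\<lambda>\<omega>. real_of_ereal (g \<omega>))"
    and "ext_expectation M g = ereal (\<integral>\<omega>. real_of_ereal (g \<omega>) \<partial>M)"
proof -
  define r where "r \<omega> = real_of_ereal (g \<omega>)" for \<omega>
  have [measurable]: "r \<in> borel_measurable M"
    unfolding r_def using assms(1) by measurable
  have "g \<omega> = ereal (r \<omega>)" if "\<omega> \<in> space M" for \<omega>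
    using assms(2) that by (auto simp: r_def)
  then have pos: "(\<integral>\<^sup>+ \<omega>. e2ennreal (g \<omega>) \<partial>M) = (\<integral>\<^sup>+ \<omega>. ennreal (r \<omega>) \<partial>M)"
    and neg: "(\<integral>\<^sup>+ \<omega>. e2ennreal (- g \<omega>) \<partial>M) = (\<integral>\<^sup>+ \<omega>. ennreal (- r \<omega>) \<partial>M)"
    by (auto intro!: nn_integral_cong)
  have E: "ext_expectation M g
      = enn2ereal (\<integral>\<^sup>+ \<omega>. ennreal (r \<omega>) \<partial>M) - enn2ereal (\<integral>\<^sup>+ \<omega>. ennreal (- r \<omega>) \<partial>M)"
    unfolding ext_expectation_def pos neg ..
  obtain q where q: "(\<integral>\<^sup>+ \<omega>. ennreal (- r \<omega>) \<partial>M) = ennreal q" and "0 \<le> q"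
    using assms(3) neg by (cases "\<integral>\<^sup>+ \<omega>. ennreal (- r \<omega>) \<partial>M") auto
  moreover have pos_fin: "(\<integral>\<^sup>+ \<omega>. ennreal (r \<omega>) \<partial>M) \<noteq> \<infinity>"
  proof
    assume "(\<integral>\<^sup>+ \<omega>. ennreal (r \<omega>) \<partial>M) = \<infinity>"
    with assms(4) show False
      unfolding E q by simp
  qed
  ultimately show int: "integrable M r"
    by (simp add: real_integrable_def)
  show "ext_expectation M g = ereal (integral\<^sup>L M r)"
    unfolding E real_lebesgue_integral_def[OF int] q using pos_fin \<open>0 \<le> q\<close>
    by (cases "\<integral>\<^sup>+ \<omega>. ennreal (r \<omega>) \<partial>M") auto
qed

section \<open>The SAA problem\<close>

locale saa_setting =
  fixes P :: "'b measure" and f :: "'b \<Rightarrow> 'a::euclidean_space \<Rightarrow> ereal"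
    and X :: "'a set" and xstar :: "nat \<Rightarrow> (nat \<Rightarrow> 'b) \<Rightarrow> 'a"
  assumes prob: "prob_space P"
    and X_closed: "closed X" and X_convex: "convex X"
    and f_convex: "\<forall>\<omega>\<in>space P. ext_convex (f \<omega>)"
    and f_not_minf: "\<forall>\<omega>\<in>space P. \<forall>x. f \<omega> x \<noteq> -\<infinity>"
    and f_meas: "\<forall>x. (\<lambda>\<omega>. f \<omega> x) \<in> borel_measurable P"
    and F_not_minf: "\<forall>x. (\<integral>\<^sup>+ \<omega>. e2ennreal (- f \<omega> x) \<partial>P) < \<infinity>"
    and opt_ne: "opt_set P f X \<noteq> {}" and opt_compact: "compact (opt_set P f X)"
    and saa_opt: "\<forall>N>0. \<forall>s\<in>space (PiM {..<N} (\<lambda>_. P)).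
        xstar N s \<in> X \<and> saa_obj f N s (xstar N s) < \<infinity> \<and>
        (\<forall>y\<in>X. saa_obj f N s (xstar N s) \<le> saa_obj f N s y)"
    and cond: "\<forall>K. compact K \<and> K \<subseteq> domF P f \<longrightarrow>
        (\<forall>x\<in>K. \<exists>\<delta>>0. \<forall>t. \<bar>t\<bar> < \<delta> \<longrightarrow>
            (\<integral>\<^sup>+ \<omega>. ennreal (exp (t * (real_of_ereal (f \<omega> x) - real_of_ereal (Fobj P f x)))) \<partial>P) < \<infinity>)
      \<and> (\<exists>\<kappa>::'b \<Rightarrow> real. \<kappa> \<in> borel_measurable P \<and> (\<forall>\<omega>\<in>space P. 0 \<le> \<kappa> \<omega>) \<and> integrable P \<kappa>
           \<and> (\<forall>\<omega>\<in>space P. (\<forall>x\<in>K. f \<omega> x \<noteq> \<infinity>)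
                 \<and> lipschitz_on (\<kappa> \<omega>) K (\<lambda>x. real_of_ereal (f \<omega> x)))
           \<and> (\<exists>\<delta>>0. \<forall>t. \<bar>t\<bar> < \<delta> \<longrightarrow> (\<integral>\<^sup>+ \<omega>. ennreal (exp (t * \<kappa> \<omega>)) \<partial>P) < \<infinity>))"
begin

sublocale prob_space P
  by (rule prob)

abbreviation "X_opt \<equiv> opt_set P f X"
abbreviation "f_real \<omega> x \<equiv> real_of_ereal (f \<omega> x)"
abbreviation "F_real x \<equiv> expectation (\<lambda>\<omega>. f_real \<omega> x)"

lemma f_real_measurable [measurable]: "(\<lambda>\<omega>. f_real \<omega> x) \<in> borel_measurable P"
  by (intro borel_measurable_real_of_ereal) (use f_meas in blast)

lemma finite_on_domF:
  assumes "x \<in> domF P f" "\<omega> \<in> space P"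
  shows "\<bar>f \<omega> x\<bar> \<noteq> \<infinity>"
  using cond[rule_format, of "{x}"] f_not_minf assms by auto

lemma feas_degree_domF:
  assumes "x \<in> domF P f"
  shows "feas_degree P f x = 1"
proof -
  have "{\<omega> \<in> space P. f \<omega> x < \<infinity>} = space P"
    using finite_on_domF[OF assms] by (force simp: less_top[symmetric])
  then show ?thesis
    by (simp add: feas_degree_def prob_space)
qed

lemma F_real_domF:
  assumes "x \<in> domF P f"
  shows "integrable P (\<lambda>\<omega>. f_real \<omega> x)" and "Fobj P f x = ereal (F_real x)"
  using ext_expectation_eq_integral[OF f_meas[rule_format] _ F_not_minf[rule_format], of x]
    finite_on_domF[OF assms] assms
  by (auto simp: Fobj_def domF_def)

lemma mgf_f_real_domF:
  assumes "x \<in> domF P f"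
  shows "mgf_finite_near_0 P (\<lambda>\<omega>. f_real \<omega> x)"
proof -
  obtain \<delta> where "0 < \<delta>" and "\<forall>t. \<bar>t\<bar> < \<delta> \<longrightarrow>
      (\<integral>\<^sup>+ \<omega>. ennreal (exp (t * (f_real \<omega> x - F_real x))) \<partial>P) < \<infinity>"
    using cond[rule_format, of "{x}"] assms F_real_domF(2)[OF assms] by auto
  then have "mgf_finite_near_0 P (\<lambda>\<omega>. f_real \<omega> x - F_real x)"
    by (intro mgf_finite_near_0I) auto
  then show ?thesis
    by (simp add: mgf_finite_near_0_diff_const_iff)
qed

lemma lipschitz_weightE:
  assumes "compact K" "K \<subseteq> domF P f"
  obtains \<kappa> where "integrable P \<kappa>" "mgf_finite_near_0 P \<kappa>"
    "\<And>\<omega>. \<omega> \<in> space P \<Longrightarrow> lipschitz_on (\<kappa> \<omega>) K (f_real \<omega>)"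
    "lipschitz_on (expectation \<kappa>) K F_real"
proof -
  obtain \<kappa> \<delta> where "\<kappa> \<in> borel_measurable P" "integrable P \<kappa>" "0 < \<delta>"
    "\<forall>t. \<bar>t\<bar> < \<delta> \<longrightarrow> (\<integral>\<^sup>+ \<omega>. ennreal (exp (t * \<kappa> \<omega>)) \<partial>P) < \<infinity>"
    "\<forall>\<omega>\<in>space P. lipschitz_on (\<kappa> \<omega>) K (f_real \<omega>)"
    using cond[rule_format, of K] assms by blast
  moreover have "lipschitz_on (expectation \<kappa>) K F_real"
    using calculation F_real_domF(1) assms(2) by (intro lipschitz_on_integral) auto
  ultimately show ?thesis
    using that mgf_finite_near_0I by blast
qed

lemma F_real_opt_less:
  assumes "x\<^sub>0 \<in> X_opt" "z \<in> X - X_opt" "z \<in> domF P f"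
  shows "F_real x\<^sub>0 < F_real z"
proof -
  have "Fobj P f x\<^sub>0 = (INF y\<in>X. Fobj P f y)" "Fobj P f z \<noteq> (INF y\<in>X. Fobj P f y)"
    using assms(1,2) by (auto simp: opt_set_def)
  moreover have "(INF y\<in>X. Fobj P f y) \<le> Fobj P f z"
    using assms(2) by (auto intro: INF_lower)
  ultimately have less: "Fobj P f x\<^sub>0 < Fobj P f z"
    by simp
  then have "x\<^sub>0 \<in> domF P f"
    using assms(3) by (auto simp: domF_def)
  with less show ?thesis
    using F_real_domF(2) assms(3) by simp
qed

lemma F_real_gap:
  assumes "x\<^sub>0 \<in> X_opt" "compact B" "B \<subseteq> (X - X_opt) \<inter> domF P f" "continuous_on B F_real"
  obtains \<gamma> where "0 < \<gamma>" "\<forall>z\<in>B. F_real x\<^sub>0 + \<gamma> \<le> F_real z"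
  using compact_continuous_gap[OF assms(2,4)] F_real_opt_less[OF assms(1)] assms(3) that by blast

lemma sample_in_space: "s \<in> space (iid_sample P N) \<Longrightarrow> i < N \<Longrightarrow> s i \<in> space P"
  by (auto simp: space_PiM PiE_iff)

lemma saa_solution_finite:
  assumes "0 < N" "s \<in> space (iid_sample P N)" "i < N"
  shows "f (s i) (xstar N s) < \<infinity>"
proof (rule ccontr)
  assume "\<not> f (s i) (xstar N s) < \<infinity>"
  then have "(\<Sum>i<N. f (s i) (xstar N s)) = \<infinity>"
    using assms(3) by (subst sum_Pinfty) (auto simp: less_top[symmetric])
  moreover have "saa_obj f N s (xstar N s) < \<infinity>"
    using saa_opt assms(1,2) by blast
  ultimately show False
    using assms(1) by (simp add: saa_obj_def)
qed

lemma saa_solution_le: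
  assumes "0 < N" "s \<in> space (iid_sample P N)" "w \<in> X" "w \<in> domF P f"
  shows "(\<Sum>i<N. f_real (s i) (xstar N s)) \<le> (\<Sum>i<N. f_real (s i) w)"
proof -
  have "\<bar>f (s i) (xstar N s)\<bar> \<noteq> \<infinity>" "\<bar>f (s i) w\<bar> \<noteq> \<infinity>" if "i < N" for i
    using saa_solution_finite[OF assms(1,2) that] finite_on_domF[OF assms(4)]
      f_not_minf sample_in_space[OF assms(2) that] by auto
  then have "(\<Sum>i<N. f (s i) (xstar N s)) = ereal (\<Sum>i<N. f_real (s i) (xstar N s))"
    and "(\<Sum>i<N. f (s i) w) = ereal (\<Sum>i<N. f_real (s i) w)"
    by (auto simp: ereal_real' simp flip: sum_ereal intro!: sum.cong)
  moreover have "saa_obj f N s (xstar N s) \<le> saa_obj f N s w"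
    using saa_opt assms by blast
  ultimately show ?thesis
    using assms(1) by (simp add: saa_obj_def divide_le_cancel)
qed

lemma saa_level_point:
  assumes "0 < N" "s \<in> space (iid_sample P N)" "x\<^sub>0 \<in> X_opt" "x\<^sub>0 \<in> domF P f"
    and "0 \<le> \<epsilon>" "\<epsilon> \<le> infdist (xstar N s) X_opt"
  obtains z where "z \<in> X" "infdist z X_opt = \<epsilon>" "(\<Sum>i<N. f_real (s i) z) \<le> (\<Sum>i<N. f_real (s i) x\<^sub>0)"
proof -
  let ?y = "xstar N s"
  have "x\<^sub>0 \<in> X" "?y \<in> X"
    using assms(3) saa_opt assms(1,2) by (auto simp: opt_set_def)
  obtain t where t: "0 \<le> t" "t \<le> 1" and level: "infdist ((1 - t) *\<^sub>R x\<^sub>0 + t *\<^sub>R ?y) X_opt = \<epsilon>"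
    using infdist_level_on_segment[of x\<^sub>0 X_opt \<epsilon> ?y] assms(3,5,6) by auto
  define z where "z = (1 - t) *\<^sub>R x\<^sub>0 + t *\<^sub>R ?y"
  have "z \<in> X"
    unfolding z_def using t \<open>x\<^sub>0 \<in> X\<close> \<open>?y \<in> X\<close> by (intro convexD[OF X_convex]) auto
  have "(\<Sum>i<N. f_real (s i) z) \<le> (\<Sum>i<N. (1 - t) * f_real (s i) x\<^sub>0 + t * f_real (s i) ?y)"
  proof (intro sum_mono)
    fix i assume "i \<in> {..<N}"
    then have "s i \<in> space P" "f (s i) ?y < \<infinity>"
      using sample_in_space[OF assms(2)] saa_solution_finite[OF assms(1,2)] by auto
    moreover have "f (s i) x\<^sub>0 < \<infinity>"
      using finite_on_domF[OF assms(4) \<open>s i \<in> space P\<close>] by (cases "f (s i) x\<^sub>0") auto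
    ultimately
    show "f_real (s i) z \<le> (1 - t) * f_real (s i) x\<^sub>0 + t * f_real (s i) ?y"
      unfolding z_def using f_convex f_not_minf t by (intro ext_convex_real_le) auto
  qed
  also have "\<dots> = (1 - t) * (\<Sum>i<N. f_real (s i) x\<^sub>0) + t * (\<Sum>i<N. f_real (s i) ?y)"
    by (simp add: sum.distrib sum_distrib_left)
  also have "\<dots> \<le> (\<Sum>i<N. f_real (s i) x\<^sub>0)"
    using saa_solution_le[OF assms(1,2) \<open>x\<^sub>0 \<in> X\<close> assms(4)] t
    by (simp add: algebra_simps mult_left_mono)
  finally show ?thesis
    using that \<open>z \<in> X\<close> level by (simp add: z_def)
qed

lemma far_solution_deviates:
  assumes "0 < N" "s \<in> space (iid_sample P N)" "x\<^sub>0 \<in> X_opt" "x\<^sub>0 \<in> domF P f"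
    and "0 \<le> \<epsilon>" "\<epsilon> \<le> infdist (xstar N s) X_opt"
    and "{x \<in> X. infdist x X_opt = \<epsilon>} \<subseteq> (\<Union>c\<in>T. ball c r)"
    and "{x \<in> X. infdist x X_opt = \<epsilon>} \<subseteq> K" "T \<subseteq> K"
    and "\<And>\<omega>. \<omega> \<in> space P \<Longrightarrow> lipschitz_on (\<kappa> \<omega>) K (f_real \<omega>)"
  obtains c where "c \<in> T"
    "(\<Sum>i<N. f_real (s i) c) \<le> (\<Sum>i<N. f_real (s i) x\<^sub>0) + r * (\<Sum>i<N. \<kappa> (s i))"
proof -
  obtain z where z: "z \<in> X" "infdist z X_opt = \<epsilon>"
    and le: "(\<Sum>i<N. f_real (s i) z) \<le> (\<Sum>i<N. f_real (s i) x\<^sub>0)"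
    using saa_level_point[OF assms(1-6)] .
  then have "z \<in> K"
    using assms(8) by blast
  have "z \<in> (\<Union>c\<in>T. ball c r)"
    using subsetD[OF assms(7)] z by simp
  then obtain c where "c \<in> T" "dist c z < r"
    by auto
  then have "c \<in> K"
    using assms(9) by blast
  have "lipschitz_on (\<kappa> (s i)) K (f_real (s i))" if "i \<in> {..<N}" for i
    using assms(10) sample_in_space[OF assms(2)] that by simp
  then have "(\<Sum>i<N. f_real (s i) c) \<le> (\<Sum>i<N. f_real (s i) z) + r * (\<Sum>i<N. \<kappa> (s i))"
    using \<open>c \<in> K\<close> \<open>z \<in> K\<close> \<open>dist c z < r\<close> by (intro sum_le_lipschitz_on) auto
  with le \<open>c \<in> T\<close> show ?thesis
    by (intro that) auto
qed

definition deviation_event :: "'a \<Rightarrow> 'a set \<Rightarrow> ('b \<Rightarrow> real) \<Rightarrow> real \<Rightarrow> nat \<Rightarrow> (nat \<Rightarrow> 'b) set" where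
  "deviation_event x\<^sub>0 T \<kappa> \<eta> N =
      {s \<in> space (iid_sample P N). real N * (expectation \<kappa> + 1) \<le> (\<Sum>i<N. \<kappa> (s i))}
    \<union> {s \<in> space (iid_sample P N). real N * (F_real x\<^sub>0 + \<eta>) \<le> (\<Sum>i<N. f_real (s i) x\<^sub>0)}
    \<union> (\<Union>c\<in>T. {s \<in> space (iid_sample P N). (\<Sum>i<N. f_real (s i) c) \<le> real N * (F_real c - \<eta>)})"

lemma deviation_event_exponentially_rare:
  assumes "finite T" "insert x\<^sub>0 T \<subseteq> domF P f" "integrable P \<kappa>" "mgf_finite_near_0 P \<kappa>" "0 < \<eta>"
  shows "exponentially_rare P (deviation_event x\<^sub>0 T \<kappa> \<eta>)"
  unfolding deviation_event_def using assms
  by (intro exponentially_rare_Un exponentially_rare_UN iid_upper_tail_exponentially_rare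
      iid_lower_tail_exponentially_rare F_real_domF(1) mgf_f_real_domF) auto

lemma far_solution_in_deviation_event:
  assumes "0 < N" "s \<in> space (iid_sample P N)" "x\<^sub>0 \<in> X_opt" "x\<^sub>0 \<in> domF P f"
    and "0 \<le> \<epsilon>" "\<epsilon> \<le> infdist (xstar N s) X_opt"
    and "{x \<in> X. infdist x X_opt = \<epsilon>} \<subseteq> (\<Union>c\<in>T. ball c r)"
    and "{x \<in> X. infdist x X_opt = \<epsilon>} \<subseteq> K" "T \<subseteq> K"
    and "\<And>\<omega>. \<omega> \<in> space P \<Longrightarrow> lipschitz_on (\<kappa> \<omega>) K (f_real \<omega>)"
    and "0 \<le> r" "r * (expectation \<kappa> + 1) \<le> \<eta>" "\<forall>c\<in>T. F_real x\<^sub>0 + 3 * \<eta> \<le> F_real c"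
  shows "s \<in> deviation_event x\<^sub>0 T \<kappa> \<eta> N"
proof (rule ccontr)
  assume "s \<notin> deviation_event x\<^sub>0 T \<kappa> \<eta> N"
  then have \<kappa>: "(\<Sum>i<N. \<kappa> (s i)) < real N * (expectation \<kappa> + 1)"
    and x\<^sub>0: "(\<Sum>i<N. f_real (s i) x\<^sub>0) < real N * (F_real x\<^sub>0 + \<eta>)"
    and T: "\<forall>c\<in>T. real N * (F_real c - \<eta>) < (\<Sum>i<N. f_real (s i) c)"
    using assms(2) by (auto simp: deviation_event_def)
  obtain c where "c \<in> T"
    and dev: "(\<Sum>i<N. f_real (s i) c) \<le> (\<Sum>i<N. f_real (s i) x\<^sub>0) + r * (\<Sum>i<N. \<kappa> (s i))"
    using far_solution_deviates[OF assms(1-10)] .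
  have "r * (\<Sum>i<N. \<kappa> (s i)) \<le> real N * (r * (expectation \<kappa> + 1))"
    using mult_left_mono[OF less_imp_le[OF \<kappa>] assms(11)] by (simp add: algebra_simps)
  also have "\<dots> \<le> real N * \<eta>"
    using assms(12) by (simp add: mult_left_mono)
  finally have "(\<Sum>i<N. f_real (s i) c) < real N * (F_real x\<^sub>0 + 2 * \<eta>)"
    using dev x\<^sub>0 by (simp add: algebra_simps)
  also have "\<dots> \<le> real N * (F_real c - \<eta>)"
    using assms(13) \<open>c \<in> T\<close> by (intro mult_left_mono) auto
  finally show False
    using T \<open>c \<in> T\<close> by force
qed

lemma saa_solution_concentrates:
  assumes "0 < \<epsilon>" "{x. infdist x X_opt \<le> \<epsilon>} \<subseteq> domF P f"
  obtains A where "exponentially_rare P A"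
    "\<And>N. 0 < N \<Longrightarrow> {s \<in> space (iid_sample P N). \<epsilon> \<le> infdist (xstar N s) X_opt} \<subseteq> A N"
proof -
  obtain x\<^sub>0 where "x\<^sub>0 \<in> X_opt"
    using opt_ne by blast
  then have "x\<^sub>0 \<in> domF P f"
    using assms by auto
  define B where "B = {x \<in> X. infdist x X_opt = \<epsilon>}"
  have "compact B"
    unfolding B_def using X_closed opt_compact opt_ne assms(1) by (rule compact_infdist_level)
  moreover have B_sub: "B \<subseteq> (X - X_opt) \<inter> domF P f"
    using assms by (auto simp: B_def)
  ultimately obtain \<kappa> where \<kappa>: "integrable P \<kappa>" "mgf_finite_near_0 P \<kappa>"
    and lip: "\<And>\<omega>. \<omega> \<in> space P \<Longrightarrow> lipschitz_on (\<kappa> \<omega>) B (f_real \<omega>)"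
    and F_lip: "lipschitz_on (expectation \<kappa>) B F_real"
    using lipschitz_weightE by blast
  then obtain \<gamma> where "0 < \<gamma>" "\<forall>z\<in>B. F_real x\<^sub>0 + \<gamma> \<le> F_real z"
    using F_real_gap[OF \<open>x\<^sub>0 \<in> X_opt\<close> \<open>compact B\<close> B_sub] lipschitz_on_continuous_on by blast
  \<comment> \<open>Two deviations of size \<open>\<eta>\<close> and the Lipschitz error \<open>r (E \<kappa> + 1) = \<eta>\<close> cannot bridge the gap \<open>3 \<eta>\<close>.\<close>
  define \<eta> where "\<eta> = \<gamma> / 3"
  define r where "r = \<eta> / (expectation \<kappa> + 1)"
  have "0 < \<eta>" and gap: "\<forall>z\<in>B. F_real x\<^sub>0 + 3 * \<eta> \<le> F_real z"
    using \<open>0 < \<gamma>\<close> \<open>\<forall>z\<in>B. F_real x\<^sub>0 + \<gamma> \<le> F_real z\<close> by (simp_all add: \<eta>_def)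
  moreover have "0 \<le> expectation \<kappa>"
    using lipschitz_on_nonneg[OF F_lip] .
  ultimately have "0 < r" "r * (expectation \<kappa> + 1) = \<eta>"
    by (simp_all add: r_def add_nonneg_eq_0_iff)
  obtain T where "finite T" "T \<subseteq> B" and cover: "B \<subseteq> (\<Union>c\<in>T. ball c r)"
    using compactE_image[OF \<open>compact B\<close>, of B "\<lambda>c. ball c r"] \<open>0 < r\<close> by force
  show ?thesis
  proof (rule that[of "deviation_event x\<^sub>0 T \<kappa> \<eta>"])
    show "exponentially_rare P (deviation_event x\<^sub>0 T \<kappa> \<eta>)"
      using \<open>finite T\<close> \<open>T \<subseteq> B\<close> B_sub \<open>x\<^sub>0 \<in> domF P f\<close> \<kappa> \<open>0 < \<eta>\<close>
      by (intro deviation_event_exponentially_rare) auto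
    show "{s \<in> space (iid_sample P N). \<epsilon> \<le> infdist (xstar N s) X_opt} \<subseteq> deviation_event x\<^sub>0 T \<kappa> \<eta> N"
      if "0 < N" for N
    proof safe
      fix s assume "s \<in> space (iid_sample P N)" "\<epsilon> \<le> infdist (xstar N s) X_opt"
      with \<open>0 < \<epsilon>\<close> \<open>0 < r\<close> \<open>r * (expectation \<kappa> + 1) = \<eta>\<close> \<open>T \<subseteq> B\<close> gap
      show "s \<in> deviation_event x\<^sub>0 T \<kappa> \<eta> N"
        by (intro far_solution_in_deviation_event[OF that _ \<open>x\<^sub>0 \<in> X_opt\<close> \<open>x\<^sub>0 \<in> domF P f\<close> _ _
              cover[unfolded B_def] _ _ lip[unfolded B_def]]) (auto simp: B_def)
    qed
  qed
qed

end

theorem theorem3p3: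
  fixes P :: "'b measure" and f :: "'b \<Rightarrow> 'a::euclidean_space \<Rightarrow> ereal"
    and X :: "'a set" and xstar :: "nat \<Rightarrow> (nat \<Rightarrow> 'b) \<Rightarrow> 'a"
  assumes prob: "prob_space P"
    and X_closed: "closed X" and X_convex: "convex X" and X_ne: "X \<noteq> {}"
    and f_convex: "\<forall>\<omega>\<in>space P. ext_convex (f \<omega>)"
    and f_not_minf: "\<forall>\<omega>\<in>space P. \<forall>x. f \<omega> x \<noteq> -\<infinity>"
    and f_meas: "\<forall>x. (\<lambda>\<omega>. f \<omega> x) \<in> borel_measurable P"
    and F_not_minf: "\<forall>x. (\<integral>\<^sup>+ \<omega>. e2ennreal (- f \<omega> x) \<partial>P) < \<infinity>"
    and F_finite_somewhere: "\<exists>x\<in>X. Fobj P f x < \<infinity>"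
    and opt_ne: "opt_set P f X \<noteq> {}" and opt_compact: "compact (opt_set P f X)"
    and saa_opt: "\<forall>N>0. \<forall>s\<in>space (PiM {..<N} (\<lambda>_. P)).
        xstar N s \<in> X \<and> saa_obj f N s (xstar N s) < \<infinity> \<and>
        (\<forall>y\<in>X. saa_obj f N s (xstar N s) \<le> saa_obj f N s y)"
    and cond: "\<forall>K. compact K \<and> K \<subseteq> domF P f \<longrightarrow>
        (\<forall>x\<in>K. \<exists>\<delta>>0. \<forall>t. \<bar>t\<bar> < \<delta> \<longrightarrow>
            (\<integral>\<^sup>+ \<omega>. ennreal (exp (t * (real_of_ereal (f \<omega> x) - real_of_ereal (Fobj P f x)))) \<partial>P) < \<infinity>)
      \<and> (\<exists>\<kappa>::'b \<Rightarrow> real. \<kappa> \<in> borel_measurable P \<and> (\<forall>\<omega>\<in>space P. 0 \<le> \<kappa> \<omega>) \<and> integrable P \<kappa>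
           \<and> (\<forall>\<omega>\<in>space P. (\<forall>x\<in>K. f \<omega> x \<noteq> \<infinity>)
                 \<and> lipschitz_on (\<kappa> \<omega>) K (\<lambda>x. real_of_ereal (f \<omega> x)))
           \<and> (\<exists>\<delta>>0. \<forall>t. \<bar>t\<bar> < \<delta> \<longrightarrow> (\<integral>\<^sup>+ \<omega>. ennreal (exp (t * \<kappa> \<omega>)) \<partial>P) < \<infinity>))"
    and opt_interior: "opt_set P f X \<subseteq> interior (domF P f)"
  shows "\<exists>C>0. \<exists>\<beta>>0. \<forall>N>0. \<exists>A\<in>sets (PiM {..<N} (\<lambda>_. P)).
           {s \<in> space (PiM {..<N} (\<lambda>_. P)). feas_degree P f (xstar N s) < 1} \<subseteq> A
           \<and> measure (PiM {..<N} (\<lambda>_. P)) A \<le> C * exp (- real N * \<beta>)"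
proof -
  interpret saa_setting P f X xstar
    by (rule saa_setting.intro) fact+
  obtain \<epsilon> where "0 < \<epsilon>" and thick: "{x. infdist x X_opt \<le> \<epsilon>} \<subseteq> domF P f"
    using thickening_subset_of_subset_interior[OF opt_compact opt_ne opt_interior] by blast
  obtain A where rare: "exponentially_rare P A"
    and far: "\<And>N. 0 < N \<Longrightarrow> {s \<in> space (iid_sample P N). \<epsilon> \<le> infdist (xstar N s) X_opt} \<subseteq> A N"
    using saa_solution_concentrates[OF \<open>0 < \<epsilon>\<close> thick] by blast
  have "{s \<in> space (iid_sample P N). feas_degree P f (xstar N s) < 1} \<subseteq> A N" if "0 < N" for N
  proof -
    have "\<epsilon> \<le> infdist (xstar N s) X_opt" if "feas_degree P f (xstar N s) < 1" for s
    proof -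
      have "xstar N s \<notin> domF P f"
        using that feas_degree_domF by force
      then show ?thesis
        using thick by force
    qed
    then show ?thesis
      using far[OF \<open>0 < N\<close>] by blast
  qed
  with rare show ?thesis
    unfolding exponentially_rare_def by blast
qed

end
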